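(* Let $n\ge 1$ and let $M\le N$ be integers. For each $s\in\{0,1,\dots,n\}$, let $\mathcal P_s$ be the set of pure diagrams $\pi(d_0,\dots,d_t)$ lying in $B_{M,N}$ with codimension $t\ge s$, partially ordered as described in the context. Then every maximal chain in $\mathcal P_s$ is a basis of the $\mathbb Q$-vector space $B^s_{M,N}$.
   Context: $B_{M,N}$ is the $\mathbb Q$-vector space of arrays $\beta=(\beta_{i,j})$ indexed by $0\le i\le n$, $j\in\mathbb Z$, with $\beta_{i,j}=0$ unless $M+i\le j\le N+i$ (so $\dim B_{M,N}=(n+1)(N-M+1)$). For $0\le s\le n$, $B^s_{M,N}$ is the subspace of those $\beta$ satisfying the Herzog–Kühl equations $\sum_{i=0}^n\sum_{j}(-1)^i\beta_{i,j}\,j^m=0$ for $m=0,1,\dots,s-1$. For integers $d_0<d_1<\dots<d_t$ with $0\le t\le n$, the pure diagram $\pi(d_0,\dots,d_t)$ is the array whose entry in position $(i,d_i)$ is $(-1)^i\prod_{0\le j\le t,\,j\ne i}\frac{1}{d_j-d_i}$ for $i=0,\dots,t$, and whose other entries are $0$; its codimension is $t$. It lies in $B_{M,N}$ iff $M+i\le d_i\le N+i$ for all $i$. Partial order: $\pi(d_0,\dots,d_t)\le\pi(d'_0,\dots,d'_u)$ iff $t\ge u$ and $d_i\le d'_i$ for $i=0,\dots,u$. A chain is a totally ordered subset; a maximal chain of a set is a chain in that set not properly contained in another chain in that set. *)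

theory Defs
  imports Complex_Main "HOL-Library.Function_Algebras"
begin

type_synonym array = "nat \<Rightarrow> int \<Rightarrow> rat"

definition arr_scale :: "rat \<Rightarrow> array \<Rightarrow> array" where
  "arr_scale c f = (\<lambda>i j. c * f i j)"

interpretation arr: vector_space arr_scale
  by unfold_locales (auto simp: arr_scale_def fun_eq_iff algebra_simps)

definition Bspace :: "nat \<Rightarrow> int \<Rightarrow> int \<Rightarrow> array set" where
  "Bspace n M N = {\<beta>. \<forall>i j. \<beta> i j \<noteq> 0 \<longrightarrow> i \<le> n \<and> M + int i \<le> j \<and> j \<le> N + int i}"

text \<open>B^s_{M,N}: the Herzog--Kuehl equations for m = 0, ..., s-1 (the sum over j is finite
  on B_{M,N}, namely over M+i <= j <= N+i).\<close>
definition BHK :: "nat \<Rightarrow> int \<Rightarrow> int \<Rightarrow> nat \<Rightarrow> array set" where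
  "BHK n M N s = {\<beta> \<in> Bspace n M N.
     \<forall>m<s. (\<Sum>i\<le>n. \<Sum>j\<in>{M + int i..N + int i}. (-1) ^ i * \<beta> i j * of_int j ^ m) = 0}"

text \<open>Pure diagram pi(d_0,...,d_t), the degree sequence given as the list d of length t+1.\<close>
definition pure :: "int list \<Rightarrow> array" where
  "pure d = (\<lambda>i j. if i < length d \<and> j = d ! i
      then (-1) ^ i * (\<Prod>k\<in>{0..<length d} - {i}. 1 / of_int (d ! k - d ! i))
      else 0)"

definition degseq :: "nat \<Rightarrow> int list \<Rightarrow> bool" where
  "degseq n d \<longleftrightarrow> d \<noteq> [] \<and> length d - 1 \<le> n \<and> sorted_wrt (<) d"

text \<open>P_s: pure diagrams in B_{M,N} of codimension t >= s (represented by degree sequences).\<close>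
definition Pset :: "nat \<Rightarrow> int \<Rightarrow> int \<Rightarrow> nat \<Rightarrow> int list set" where
  "Pset n M N s = {d. degseq n d \<and> pure d \<in> Bspace n M N \<and> s \<le> length d - 1}"

definition pd_le :: "int list \<Rightarrow> int list \<Rightarrow> bool" where
  "pd_le d d' \<longleftrightarrow> length d' \<le> length d \<and> (\<forall>i<length d'. d ! i \<le> d' ! i)"

definition is_chain :: "int list set \<Rightarrow> bool" where
  "is_chain C \<longleftrightarrow> (\<forall>a\<in>C. \<forall>b\<in>C. pd_le a b \<or> pd_le b a)"

definition maximal_chain_in :: "int list set \<Rightarrow> int list set \<Rightarrow> bool" where
  "maximal_chain_in C P \<longleftrightarrow> C \<subseteq> P \<and> is_chain C \<and>
     (\<forall>C'. C \<subseteq> C' \<and> C' \<subseteq> P \<and> is_chain C' \<longrightarrow> C' = C)"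

end

theory Submission
  imports Defs "HOL-Computational_Algebra.Polynomial"
begin

text \<open>For \<open>m \<le> t\<close> the divided-difference identity
  \<open>\<Sum>i\<le>t. d\<^sub>i\<^sup>m / (\<Prod>k\<noteq>i. d\<^sub>i - d\<^sub>k) = (if m = t then 1 else 0)\<close> shows that
  \<open>\<pi>(d\<^sub>0, \<dots>, d\<^sub>t)\<close> satisfies the first \<open>t\<close> Herzog--Kuehl equations, so a chain in \<open>P\<^sub>s\<close> spans a
  subspace of \<open>B\<^sup>s\<close>. A chain is independent because its least element has an entry at which all
  other members vanish. The rank \<open>\<Sum>i. d\<^sub>i - M - i\<close> goes up by exactly one along covering
  relations, so a maximal chain passes through every rank between \<open>\<pi>(M, \<dots>, M+n)\<close> and
  \<open>\<pi>(N, \<dots>, N+s)\<close> and has \<open>(n+1)(N-M+1) - s\<close> elements. Adding the diagrams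
  \<open>\<pi>(M, \<dots>, M+t)\<close> for \<open>t < s\<close>, on which the first \<open>s\<close> Herzog--Kuehl functionals are
  unitriangular, gives \<open>dim B\<close> independent elements of \<open>B\<close>; an element of \<open>B\<^sup>s\<close> written in this
  basis has zero coefficients on the added diagrams.\<close>

lemma divided_difference_power:
  fixes x :: "nat \<Rightarrow> 'a::field"
  assumes inj: "inj_on x {..t}" and "m \<le> t"
  shows "(\<Sum>i\<le>t. x i ^ m / (\<Prod>k\<in>{..t} - {i}. x i - x k)) = (if m = t then 1 else 0)"
proof -
  let ?I = "{..t}"
  define w where "w i = (\<Prod>k\<in>?I - {i}. x i - x k)" for i
  define p where "p i = (\<Prod>k\<in>?I - {i}. [:- x k, 1:])" for i
  \<comment> \<open>\<open>q\<close> is the Lagrange interpolant of \<open>y\<^sup>m\<close> at the nodes \<open>x i\<close>, minus \<open>y\<^sup>m\<close> itself\<close>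
  define q where "q = (\<Sum>i\<in>?I. smult (x i ^ m / w i) (p i)) - monom 1 m"
  have w_nonzero: "w i \<noteq> 0" if "i \<in> ?I" for i
    unfolding w_def using inj that by (auto simp: inj_on_def)
  have degree_p: "degree (p i) = t" if "i \<in> ?I" for i
    unfolding p_def using that by (subst degree_prod_eq_sum_degree) auto
  have coeff_p: "coeff (p i) t = 1" if "i \<in> ?I" for i
  proof -
    have "lead_coeff (p i) = 1" unfolding p_def lead_coeff_prod by simp
    then show ?thesis using degree_p[OF that] by simp
  qed
  have poly_p: "poly (p i) y = (\<Prod>k\<in>?I - {i}. y - x k)" for i y
    unfolding p_def poly_prod by simp
  have q_root: "poly q (x j) = 0" if "j \<in> ?I" for j
  proof -
    have "(\<Sum>i\<in>?I. x i ^ m / w i * poly (p i) (x j)) = x j ^ m / w j * poly (p j) (x j)"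
      by (rule sum.remove[OF _ that, THEN trans]) (use that in \<open>auto simp: poly_p intro!: sum.neutral prod_zero\<close>)
    then show ?thesis
      using w_nonzero[OF that] unfolding q_def by (simp add: poly_sum poly_monom poly_p w_def)
  qed
  have "degree q \<le> t"
    unfolding q_def using \<open>m \<le> t\<close>
    by (intro degree_diff_le degree_sum_le) (auto simp: degree_p
        intro: order.trans[OF degree_smult_le] order.trans[OF degree_monom_le])
  moreover have "card (x ` ?I) = Suc t"
    using card_image[OF inj] by simp
  ultimately have "q = 0"
    using q_root card_poly_roots_bound[of q] poly_roots_finite[of q]
    by (metis (mono_tags, lifting) card_mono image_subsetI mem_Collect_eq not_less_eq_eq order.trans)
  moreover have "coeff q t = (\<Sum>i\<in>?I. x i ^ m / w i) - (if m = t then 1 else 0)"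
    unfolding q_def by (simp add: coeff_sum coeff_p)
  ultimately show ?thesis
    unfolding w_def by simp
qed

lemma pure_nonzero_iff:
  assumes "sorted_wrt (<) d"
  shows "pure d i j \<noteq> 0 \<longleftrightarrow> i < length d \<and> j = d ! i"
proof -
  have "distinct d"
    using assms by (simp add: strict_sorted_iff)
  then have "(\<Prod>k\<in>{0..<length d} - {i}. 1 / of_int (d ! k - d ! i) :: rat) \<noteq> 0" if "i < length d"
    using that by (auto simp: prod_zero_iff nth_eq_iff_index_eq)
  then show ?thesis
    unfolding pure_def by auto
qed

lemma pure_inject:
  assumes "sorted_wrt (<) d" and "sorted_wrt (<) e"
  shows "pure d = pure e \<longleftrightarrow> d = e"
proof
  assume "pure d = pure e"
  then have supp: "i < length d \<and> j = d ! i \<longleftrightarrow> i < length e \<and> j = e ! i" for i j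
    by (metis assms pure_nonzero_iff)
  have "length d = length e"
  proof (rule ccontr)
    assume "length d \<noteq> length e"
    then show False
      using supp[of "length d" "e ! length d"] supp[of "length e" "d ! length e"] by linarith
  qed
  moreover have "d ! i = e ! i" if "i < length d" for i
    using supp[of i "d ! i"] that by simp
  ultimately show "d = e"
    by (simp add: nth_equalityI)
qed simp

lemma pure_in_Bspace_iff:
  assumes "sorted_wrt (<) d"
  shows "pure d \<in> Bspace n M N \<longleftrightarrow>
    (\<forall>i<length d. i \<le> n \<and> M + int i \<le> d ! i \<and> d ! i \<le> N + int i)"
  unfolding Bspace_def using pure_nonzero_iff[OF assms] by auto

lemma Pset_iff:
  "d \<in> Pset n M N s \<longleftrightarrow> sorted_wrt (<) d \<and> s < length d \<and> length d \<le> Suc n \<and>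
     (\<forall>i<length d. M + int i \<le> d ! i \<and> d ! i \<le> N + int i)"
  unfolding Pset_def degseq_def
  by (cases d) (auto simp: pure_in_Bspace_iff less_Suc_eq_le)

definition herzog_kuehl :: "nat \<Rightarrow> int \<Rightarrow> int \<Rightarrow> nat \<Rightarrow> array \<Rightarrow> rat" where
  "herzog_kuehl n M N m \<beta> = (\<Sum>i\<le>n. \<Sum>j\<in>{M + int i..N + int i}. (-1) ^ i * \<beta> i j * of_int j ^ m)"

lemma BHK_eq: "BHK n M N s = {\<beta> \<in> Bspace n M N. \<forall>m<s. herzog_kuehl n M N m \<beta> = 0}"
  unfolding BHK_def herzog_kuehl_def ..

lemma herzog_kuehl_add:
  "herzog_kuehl n M N m (\<beta> + \<gamma>) = herzog_kuehl n M N m \<beta> + herzog_kuehl n M N m \<gamma>"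
  unfolding herzog_kuehl_def by (simp add: algebra_simps sum.distrib)

lemma herzog_kuehl_diff:
  "herzog_kuehl n M N m (\<beta> - \<gamma>) = herzog_kuehl n M N m \<beta> - herzog_kuehl n M N m \<gamma>"
  unfolding herzog_kuehl_def by (simp add: algebra_simps sum_subtractf)

lemma herzog_kuehl_scale:
  "herzog_kuehl n M N m (arr_scale c \<beta>) = c * herzog_kuehl n M N m \<beta>"
  unfolding herzog_kuehl_def arr_scale_def by (simp add: sum_distrib_left algebra_simps)

lemma subspace_BHK: "arr.subspace (BHK n M N s)"
proof (rule arr.subspaceI)
  show "0 \<in> BHK n M N s"
    unfolding BHK_eq Bspace_def herzog_kuehl_def by simp
next
  fix \<beta> \<gamma> assume "\<beta> \<in> BHK n M N s" "\<gamma> \<in> BHK n M N s"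
  then show "\<beta> + \<gamma> \<in> BHK n M N s"
    unfolding BHK_eq Bspace_def by (auto simp: herzog_kuehl_add) (metis add.right_neutral)+
next
  fix c \<beta> assume "\<beta> \<in> BHK n M N s"
  then show "arr_scale c \<beta> \<in> BHK n M N s"
    unfolding BHK_eq by (auto simp: herzog_kuehl_scale) (auto simp: Bspace_def arr_scale_def)
qed

lemma herzog_kuehl_pure_eq_sum:
  assumes "sorted_wrt (<) d" and "pure d \<in> Bspace n M N"
  shows "herzog_kuehl n M N m (pure d) = (\<Sum>i<length d. (-1) ^ i * pure d i (d ! i) * of_int (d ! i) ^ m)"
proof -
  have bounds: "i \<le> n \<and> M + int i \<le> d ! i \<and> d ! i \<le> N + int i" if "i < length d" for i
    using assms pure_in_Bspace_iff that by blast
  have row: "(\<Sum>j\<in>{M + int i..N + int i}. (-1) ^ i * pure d i j * of_int j ^ m) =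
      (if i < length d then (-1) ^ i * pure d i (d ! i) * of_int (d ! i) ^ m else 0)" for i
  proof (cases "i < length d")
    case True
    have "(\<Sum>j\<in>{M + int i..N + int i}. (-1) ^ i * pure d i j * of_int j ^ m) =
        (\<Sum>j\<in>{M + int i..N + int i}. if j = d ! i then (-1) ^ i * pure d i (d ! i) * of_int (d ! i) ^ m else 0)"
      by (rule sum.cong) (auto simp: pure_def)
    also have "\<dots> = (-1) ^ i * pure d i (d ! i) * of_int (d ! i) ^ m"
      using bounds[OF True] by (simp add: sum.delta')
    finally show ?thesis
      using True by simp
  qed (simp add: pure_def)
  have "herzog_kuehl n M N m (pure d) =
      (\<Sum>i\<in>{..n} \<inter> {i. i < length d}. (-1) ^ i * pure d i (d ! i) * of_int (d ! i) ^ m)"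
    unfolding herzog_kuehl_def row by (simp add: sum.inter_restrict[OF finite_atMost])
  also have "{..n} \<inter> {i. i < length d} = {..<length d}"
    using bounds by auto
  finally show ?thesis .
qed

lemma herzog_kuehl_pure:
  assumes "sorted_wrt (<) d" and "pure d \<in> Bspace n M N"
    and len: "length d = Suc t" and "m \<le> t"
  shows "herzog_kuehl n M N m (pure d) = (if m = t then (-1) ^ t else 0)"
proof -
  define x where "x i = (of_int (d ! i) :: rat)" for i
  have "distinct d"
    using assms(1) by (simp add: strict_sorted_iff)
  then have inj: "inj_on x {..t}"
    using len by (auto simp: inj_on_def x_def nth_eq_iff_index_eq)
  have coeff: "(-1) ^ i * pure d i (d ! i) = (-1) ^ t / (\<Prod>k\<in>{..t} - {i}. x i - x k)"
    if "i \<le> t" for i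
  proof -
    have "pure d i (d ! i) = (-1) ^ i * (\<Prod>k\<in>{0..<length d} - {i}. 1 / of_int (d ! k - d ! i))"
      using that len by (simp add: pure_def)
    also have "\<dots> = (-1) ^ i * (\<Prod>k\<in>{..t} - {i}. 1 / (x k - x i))"
      unfolding x_def of_int_diff len atLeast0LessThan lessThan_Suc_atMost ..
    also have "\<dots> = (-1) ^ i * (\<Prod>k\<in>{..t} - {i}. (-1) / (x i - x k))"
      by (metis minus_diff_eq divide_minus_right minus_divide_left)
    also have "\<dots> = (-1) ^ i * ((-1) ^ t / (\<Prod>k\<in>{..t} - {i}. x i - x k))"
      using that by (simp only: prod_dividef prod_constant card_Diff_singleton) simp
    finally show ?thesis
      by simp
  qed
  have "herzog_kuehl n M N m (pure d) = (\<Sum>i\<le>t. (-1) ^ t * (x i ^ m / (\<Prod>k\<in>{..t} - {i}. x i - x k)))"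
    unfolding herzog_kuehl_pure_eq_sum[OF assms(1,2)] len lessThan_Suc_atMost
  proof (rule sum.cong)
    fix i assume "i \<in> {..t}"
    then show "(-1) ^ i * pure d i (d ! i) * of_int (d ! i) ^ m =
        (-1) ^ t * (x i ^ m / (\<Prod>k\<in>{..t} - {i}. x i - x k))"
      by (simp add: coeff x_def)
  qed simp
  also have "\<dots> = (-1) ^ t * (if m = t then 1 else 0)"
    by (simp only: sum_distrib_left[symmetric] divided_difference_power[OF inj \<open>m \<le> t\<close>])
  finally show ?thesis
    by simp
qed

lemma pure_in_BHK:
  assumes "d \<in> Pset n M N s"
  shows "pure d \<in> BHK n M N s"
proof -
  have "s < length d"
    using assms unfolding Pset_iff by blast
  then obtain t where len: "length d = Suc t" and "s \<le> t"
    by (cases "length d") auto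
  moreover have "sorted_wrt (<) d" and "pure d \<in> Bspace n M N"
    using assms unfolding Pset_def degseq_def by auto
  ultimately show ?thesis
    unfolding BHK_eq using herzog_kuehl_pure by auto
qed

lemma pd_le_refl [simp]: "pd_le d d"
  unfolding pd_le_def by simp

lemma pd_le_trans: "pd_le a b \<Longrightarrow> pd_le b c \<Longrightarrow> pd_le a c"
  unfolding pd_le_def by (meson dual_order.trans order_less_le_trans)

lemma is_chain_subset: "is_chain C \<Longrightarrow> C' \<subseteq> C \<Longrightarrow> is_chain C'"
  unfolding is_chain_def by blast

lemma finite_chain_has_least:
  assumes "finite C" and "C \<noteq> {}" and "is_chain C"
  shows "\<exists>d\<in>C. \<forall>c\<in>C. pd_le d c"
  using assms
proof (induction C rule: finite_ne_induct)
  case (insert x F)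
  then obtain d where "d \<in> F" and least: "\<forall>c\<in>F. pd_le d c"
    using is_chain_subset by blast
  moreover have "pd_le x d \<or> pd_le d x"
    using insert.prems \<open>d \<in> F\<close> unfolding is_chain_def by blast
  ultimately show ?case
  proof (elim disjE)
    assume "pd_le x d"
    then show ?case
      using least pd_le_trans by auto
  next
    assume "pd_le d x"
    then show ?case
      using least \<open>d \<in> F\<close> by auto
  qed
qed simp

lemma pd_le_neq_witness:
  assumes "pd_le d e" and "d \<noteq> e"
  shows "\<exists>i<length d. length e \<le> i \<or> d ! i < e ! i"
proof (cases "length e < length d")
  case False
  then have "length e = length d"
    using assms(1) unfolding pd_le_def by simp
  then obtain i where "i < length d" and "d ! i \<noteq> e ! i"
    using assms(2) nth_equalityI by metis
  then show ?thesis
    using assms(1) \<open>length e = length d\<close> unfolding pd_le_def by force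
qed auto

lemma pure_vanishes_above:
  assumes "pd_le e c" and "length e \<le> i \<or> a < e ! i"
  shows "pure c i a = 0"
  using assms unfolding pd_le_def pure_def by force

lemma subspace_entry_eq_0: "arr.subspace {\<beta>. \<beta> i j = 0}"
  unfolding arr.subspace_def arr_scale_def by simp

text \<open>The least element of a chain owns an entry at which every other diagram of the chain
  vanishes, so it is not in the span of the others.\<close>

lemma independent_pure_chain:
  assumes "finite C" and "is_chain C" and "\<And>c. c \<in> C \<Longrightarrow> sorted_wrt (<) c \<and> c \<noteq> []"
  shows "arr.independent (pure ` C)"
  using assms
proof (induction C rule: finite_psubset_induct)
  case (psubset C)
  show ?case
  proof (cases "C = {}")
    case False
    obtain d where "d \<in> C" and least: "\<forall>c\<in>C. pd_le d c"
      using finite_chain_has_least[OF psubset.hyps(1) False psubset.prems(1)] by blast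
    have d: "sorted_wrt (<) d" "d \<noteq> []"
      using psubset.prems(2) \<open>d \<in> C\<close> by auto
    have chain': "is_chain (C - {d})"
      using psubset.prems(1) is_chain_subset by blast
    obtain i where "i < length d" and vanish: "\<And>c. c \<in> C - {d} \<Longrightarrow> pure c i (d ! i) = 0"
    proof (cases "C - {d} = {}")
      case True
      then show ?thesis
        using that d(2) by blast
    next
      case False
      obtain e where "e \<in> C - {d}" and least': "\<forall>c\<in>C - {d}. pd_le e c"
        using finite_chain_has_least[OF _ False chain'] psubset.hyps(1) by blast
      then obtain i where "i < length d" "length e \<le> i \<or> d ! i < e ! i"
        using pd_le_neq_witness least by blast
      then show ?thesis
        using that pure_vanishes_above least' by blast
    qed
    have "pure d \<notin> arr.span (pure ` (C - {d}))"
    proof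
      assume "pure d \<in> arr.span (pure ` (C - {d}))"
      then have "pure d i (d ! i) = 0"
        using arr.span_minimal[OF _ subspace_entry_eq_0, of "pure ` (C - {d})" i "d ! i"] vanish
        by blast
      then show False
        using pure_nonzero_iff[OF d(1)] \<open>i < length d\<close> by blast
    qed
    moreover have "arr.independent (pure ` (C - {d}))"
      using psubset \<open>d \<in> C\<close> chain' by blast
    ultimately have "arr.independent (insert (pure d) (pure ` (C - {d})))"
      by (rule arr.independent_insertI)
    moreover have "insert (pure d) (pure ` (C - {d})) = pure ` C"
      using \<open>d \<in> C\<close> by blast
    ultimately show ?thesis
      by simp
  qed (simp add: arr.independent_empty)
qed

definition consec :: "int \<Rightarrow> nat \<Rightarrow> int list" where
  "consec a t = map (\<lambda>i. a + int i) [0..<Suc t]"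

lemma length_consec [simp]: "length (consec a t) = Suc t"
  unfolding consec_def by (simp del: upt_Suc)

lemma nth_consec [simp]: "i < Suc t \<Longrightarrow> consec a t ! i = a + int i"
  unfolding consec_def by (simp del: upt_Suc)

lemma sorted_consec: "sorted_wrt (<) (consec a t)"
  by (simp add: sorted_wrt_iff_nth_less)

lemma consec_in_Pset: "M \<le> a \<Longrightarrow> a \<le> N \<Longrightarrow> s \<le> t \<Longrightarrow> t \<le> n \<Longrightarrow> consec a t \<in> Pset n M N s"
  unfolding Pset_iff by (simp add: sorted_consec)

lemma pd_le_consec: "a \<le> b \<Longrightarrow> u \<le> t \<Longrightarrow> pd_le (consec a t) (consec b u)"
  unfolding pd_le_def by simp

lemma consec_pd_le: "d \<in> Pset n M N s \<Longrightarrow> pd_le (consec M n) d"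
  unfolding Pset_iff pd_le_def by auto

lemma pd_le_consec_top: "d \<in> Pset n M N s \<Longrightarrow> pd_le d (consec N s)"
  unfolding Pset_iff pd_le_def by auto

lemma herzog_kuehl_consec:
  assumes "M \<le> N" and "t \<le> n" and "k \<le> t"
  shows "herzog_kuehl n M N k (pure (consec M t)) = (if k = t then (-1) ^ t else 0)"
proof (rule herzog_kuehl_pure[OF sorted_consec _ length_consec \<open>k \<le> t\<close>])
  show "pure (consec M t) \<in> Bspace n M N"
    using consec_in_Pset[of M M N 0 t n] assms unfolding Pset_def by simp
qed

lemma independent_pure_consec: "arr.independent (pure ` consec M ` {..<s})"
proof (rule independent_pure_chain)
  show "is_chain (consec M ` {..<s})"
    unfolding is_chain_def using nat_le_linear pd_le_consec[OF order_refl] by blast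
next
  fix c assume "c \<in> consec M ` {..<s}"
  then show "sorted_wrt (<) c \<and> c \<noteq> []"
    using sorted_consec length_consec by (metis imageE list.size(3) nat.distinct(1))
qed simp

text \<open>The Herzog--Kuehl functionals are unitriangular on the diagrams \<open>\<pi>(M, M+1, \<dots>, M+t)\<close>.\<close>

lemma span_consec_herzog_kuehl_eq_0:
  assumes "M \<le> N" and "s \<le> Suc n"
    and "y \<in> arr.span (pure ` consec M ` {..<s})" and "\<forall>k<s. herzog_kuehl n M N k y = 0"
  shows "y = 0"
  using assms(2-)
proof (induction s arbitrary: y)
  case 0
  then show ?case
    by simp
next
  case (Suc s)
  let ?W = "pure (consec M s)"
  obtain c where rest: "y - arr_scale c ?W \<in> arr.span (pure ` consec M ` {..<s})"
    using Suc.prems(2) by (auto simp: lessThan_Suc arr.span_insert)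
  have "herzog_kuehl n M N k ?W = 0" if "k < s" for k
    using herzog_kuehl_consec[OF assms(1)] Suc.prems(1) that by simp
  then have "\<forall>k<s. herzog_kuehl n M N k (y - arr_scale c ?W) = 0"
    using Suc.prems(3) by (simp add: herzog_kuehl_diff herzog_kuehl_scale)
  moreover have "s \<le> Suc n"
    using Suc.prems(1) by simp
  ultimately have "y - arr_scale c ?W = 0"
    using Suc.IH rest by blast
  then have "y = arr_scale c ?W"
    by (simp only: right_minus_eq)
  moreover have "herzog_kuehl n M N s y = 0"
    using Suc.prems(3) by simp
  ultimately show ?case
    using herzog_kuehl_consec[OF assms(1), of s n s] Suc.prems(1) by (simp add: herzog_kuehl_scale)
qed

text \<open>An absent position counts as \<open>N - M + 1\<close>, one more than the largest shift \<open>N - M\<close> of an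
  entry, so that deleting a last entry \<open>d\<^sub>t = N + t\<close> raises the rank by one, just like raising
  an entry.\<close>

definition pd_rank_at :: "int \<Rightarrow> int \<Rightarrow> int list \<Rightarrow> nat \<Rightarrow> int" where
  "pd_rank_at M N d i = (if i < length d then d ! i - M - int i else N - M + 1)"

definition pd_rank :: "nat \<Rightarrow> int \<Rightarrow> int \<Rightarrow> int list \<Rightarrow> int" where
  "pd_rank n M N d = (\<Sum>i\<le>n. pd_rank_at M N d i)"

lemma pd_rank_add_one:
  assumes "i \<le> n" and "\<And>j. pd_rank_at M N z j = pd_rank_at M N a j + (if j = i then 1 else 0)"
  shows "pd_rank n M N z = pd_rank n M N a + 1"
  unfolding pd_rank_def assms(2) sum.distrib using assms(1) by simp

lemma Pset_raise_entry:
  assumes a: "a \<in> Pset n M N s" and i: "i < length a" and "a ! i < N + int i"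
    and gap: "\<And>k. i < k \<Longrightarrow> k < length a \<Longrightarrow> a ! i + 1 < a ! k"
  defines "z \<equiv> a[i := a ! i + 1]"
  shows "z \<in> Pset n M N s" and "pd_le a z" and "pd_rank n M N z = pd_rank n M N a + 1"
proof -
  have sorted: "sorted_wrt (<) a" and len: "s < length a" "length a \<le> Suc n"
    and bounds: "\<And>j. j < length a \<Longrightarrow> M + int j \<le> a ! j \<and> a ! j \<le> N + int j"
    using a unfolding Pset_iff by auto
  have z_nth: "z ! j = (if j = i then a ! i + 1 else a ! j)" if "j < length a" for j
    unfolding z_def using that i by simp
  have "z ! j < z ! k" if "j < k" "k < length a" for j k
    using z_nth[of j] z_nth[of k] that gap[of k] sorted_wrt_nth_less[OF sorted that] by auto
  then have "sorted_wrt (<) z"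
    unfolding sorted_wrt_iff_nth_less z_def by simp
  moreover have "M + int j \<le> z ! j \<and> z ! j \<le> N + int j" if "j < length a" for j
    using that z_nth[of j] bounds[of j] \<open>a ! i < N + int i\<close> by auto
  ultimately show "z \<in> Pset n M N s"
    unfolding Pset_iff using len by (simp add: z_def)
  show "pd_le a z"
    unfolding pd_le_def using z_nth by (simp add: z_def)
  show "pd_rank n M N z = pd_rank n M N a + 1"
  proof (rule pd_rank_add_one)
    show "i \<le> n"
      using i len by simp
    show "pd_rank_at M N z j = pd_rank_at M N a j + (if j = i then 1 else 0)" for j
      unfolding pd_rank_at_def using z_nth i by (simp add: z_def)
  qed
qed

lemma Pset_drop_last:
  assumes a: "a \<in> Pset n M N s" and "Suc s < length a"
    and last: "a ! (length a - 1) = N + int (length a - 1)"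
  defines "z \<equiv> butlast a"
  shows "z \<in> Pset n M N s" and "pd_le a z" and "pd_rank n M N z = pd_rank n M N a + 1"
proof -
  have sorted: "sorted_wrt (<) a" and len: "length a \<le> Suc n"
    using a unfolding Pset_iff by auto
  have z_len: "length z = length a - 1" and z_nth: "\<And>j. j < length z \<Longrightarrow> z ! j = a ! j"
    unfolding z_def by (simp_all add: nth_butlast)
  have "sorted_wrt (<) z"
    unfolding z_def butlast_conv_take by (rule sorted_wrt_take[OF sorted])
  then show "z \<in> Pset n M N s"
    using a \<open>Suc s < length a\<close> z_len z_nth unfolding Pset_iff by auto
  show "pd_le a z"
    unfolding pd_le_def using z_len z_nth by simp
  show "pd_rank n M N z = pd_rank n M N a + 1"
  proof (rule pd_rank_add_one)
    show "length a - 1 \<le> n"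
      using len by simp
    show "pd_rank_at M N z j = pd_rank_at M N a j + (if j = length a - 1 then 1 else 0)" for j
      unfolding pd_rank_at_def using z_len z_nth last \<open>Suc s < length a\<close> by auto
  qed
qed

lemma Pset_cover_step_same_length:
  assumes a: "a \<in> Pset n M N s" and b: "b \<in> Pset n M N s" and "pd_le a b" and "a \<noteq> b"
    and same: "length b = length a"
  shows "\<exists>z\<in>Pset n M N s. pd_le a z \<and> pd_le z b \<and> pd_rank n M N z = pd_rank n M N a + 1"
proof -
  define D where "D = {i. i < length a \<and> a ! i \<noteq> b ! i}"
  have "D \<noteq> {}"
  proof
    assume "D = {}"
    then have "a = b"
      using same by (intro nth_equalityI) (auto simp: D_def)
    then show False
      using \<open>a \<noteq> b\<close> by simp
  qed
  moreover have "finite D"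
    unfolding D_def by simp
  ultimately have "Max D \<in> D" and above: "\<And>k. k \<in> D \<Longrightarrow> k \<le> Max D"
    by simp_all
  define i where "i = Max D"
  have i: "i < length a" "a ! i \<noteq> b ! i"
    using \<open>Max D \<in> D\<close> unfolding i_def D_def by simp_all
  then have raise: "a ! i + 1 \<le> b ! i"
    using \<open>pd_le a b\<close> same unfolding pd_le_def by fastforce
  have agree: "a ! k = b ! k" if "i < k" "k < length a" for k
    using above[of k] that unfolding i_def D_def by fastforce
  have b_sorted: "sorted_wrt (<) b" and "b ! i \<le> N + int i"
    using b i same unfolding Pset_iff by auto
  have "a ! i + 1 < a ! k" if "i < k" "k < length a" for k
  proof -
    have "b ! i < b ! k"
      using sorted_wrt_nth_less[OF b_sorted \<open>i < k\<close>] that same by simp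
    then show ?thesis
      using raise agree[OF that] by simp
  qed
  then have "a[i := a ! i + 1] \<in> Pset n M N s" "pd_le a (a[i := a ! i + 1])"
      "pd_rank n M N (a[i := a ! i + 1]) = pd_rank n M N a + 1"
    using Pset_raise_entry[OF a i(1)] raise \<open>b ! i \<le> N + int i\<close> by simp_all
  moreover have "pd_le (a[i := a ! i + 1]) b"
    using \<open>pd_le a b\<close> same raise i(1) unfolding pd_le_def by (auto simp: nth_list_update)
  ultimately show ?thesis
    by blast
qed

lemma Pset_cover_step:
  assumes a: "a \<in> Pset n M N s" and b: "b \<in> Pset n M N s" and "pd_le a b" and "a \<noteq> b"
  shows "\<exists>z\<in>Pset n M N s. pd_le a z \<and> pd_le z b \<and> pd_rank n M N z = pd_rank n M N a + 1"
proof (cases "length b = length a")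
  case False
  define t where "t = length a - 1"
  have t: "t < length a" "length b \<le> t" "s < length b"
    using False \<open>pd_le a b\<close> b unfolding t_def pd_le_def Pset_iff by auto
  have below_b: "pd_le z b" if "length z = length a" "\<And>j. j < t \<Longrightarrow> z ! j = a ! j" for z
    using \<open>pd_le a b\<close> t that unfolding pd_le_def by auto
  show ?thesis
  proof (cases "a ! t < N + int t")
    case True
    then have "a[t := a ! t + 1] \<in> Pset n M N s" "pd_le a (a[t := a ! t + 1])"
      "pd_rank n M N (a[t := a ! t + 1]) = pd_rank n M N a + 1"
      using Pset_raise_entry[OF a t(1)] t_def by auto
    moreover have "pd_le (a[t := a ! t + 1]) b"
      by (rule below_b) auto
    ultimately show ?thesis
      by blast
  next
    case False
    then have "a ! t = N + int t"
      using a t(1) unfolding Pset_iff by force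
    then have "butlast a \<in> Pset n M N s" "pd_le a (butlast a)"
      "pd_rank n M N (butlast a) = pd_rank n M N a + 1"
      using Pset_drop_last[OF a] t unfolding t_def by auto
    moreover have "pd_le (butlast a) b"
      using \<open>pd_le a b\<close> t unfolding pd_le_def t_def by (auto simp: nth_butlast)
    ultimately show ?thesis
      by blast
  qed
qed (use Pset_cover_step_same_length assms in blast)

lemma finite_Pset: "finite (Pset n M N s)"
proof (rule finite_subset)
  show "Pset n M N s \<subseteq> {d. set d \<subseteq> {M..N + int n} \<and> length d \<le> Suc n}"
  proof safe
    fix d x assume "d \<in> Pset n M N s" "x \<in> set d"
    then show "x \<in> {M..N + int n}"
      unfolding Pset_iff in_set_conv_nth by force
  qed (simp add: Pset_iff)
qed (rule finite_lists_length_le, simp)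

lemma maximal_chain_in_subset: "maximal_chain_in C P \<Longrightarrow> C \<subseteq> P"
  by (simp add: maximal_chain_in_def)

lemma maximal_chain_in_is_chain: "maximal_chain_in C P \<Longrightarrow> is_chain C"
  by (simp add: maximal_chain_in_def)

lemma maximal_chain_mem:
  assumes "maximal_chain_in C P" and "z \<in> P" and "\<And>c. c \<in> C \<Longrightarrow> pd_le c z \<or> pd_le z c"
  shows "z \<in> C"
proof -
  have "is_chain (insert z C)"
    using assms unfolding maximal_chain_in_def is_chain_def by auto
  then have "insert z C = C"
    using assms(1,2) unfolding maximal_chain_in_def by blast
  then show ?thesis
    by blast
qed

lemma maximal_chain_sorted:
  assumes "maximal_chain_in C (Pset n M N s)" and "c \<in> C"
  shows "sorted_wrt (<) c" and "c \<noteq> []"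
proof -
  have "c \<in> Pset n M N s"
    using maximal_chain_in_subset[OF assms(1)] assms(2) by blast
  then show "sorted_wrt (<) c" and "c \<noteq> []"
    unfolding Pset_iff by auto
qed

lemma finite_maximal_chain: "maximal_chain_in C (Pset n M N s) \<Longrightarrow> finite C"
  by (rule finite_subset[OF maximal_chain_in_subset finite_Pset])

lemma inj_on_pure_maximal_chain:
  assumes "maximal_chain_in C (Pset n M N s)"
  shows "inj_on pure C"
  using pure_inject maximal_chain_sorted[OF assms] by (intro inj_onI) blast

lemma independent_pure_maximal_chain:
  assumes "maximal_chain_in C (Pset n M N s)"
  shows "arr.independent (pure ` C)"
  using independent_pure_chain[OF finite_maximal_chain[OF assms] maximal_chain_in_is_chain[OF assms]]
    maximal_chain_sorted[OF assms] by blast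

lemma pd_rank_consec_bottom: "pd_rank n M N (consec M n) = 0"
  unfolding pd_rank_def pd_rank_at_def by (simp add: less_Suc_eq_le)

lemma pd_rank_consec_top:
  assumes "s \<le> n"
  shows "pd_rank n M N (consec N s) = int (Suc n) * (N - M + 1) - int (Suc s)"
proof -
  have "pd_rank n M N (consec N s) = (\<Sum>i\<le>n. (N - M + 1) - (if i \<le> s then 1 else 0))"
    unfolding pd_rank_def pd_rank_at_def by (intro sum.cong) (auto simp: less_Suc_eq_le)
  also have "\<dots> = int (Suc n) * (N - M + 1) - int (card ({..n} \<inter> {i. i \<le> s}))"
    by (simp add: sum_subtractf sum.If_cases)
  also have "{..n} \<inter> {i. i \<le> s} = {..s}"
    using assms by auto
  finally show ?thesis
    by simp
qed

text \<open>Every rank between the bottom \<open>\<pi>(M, \<dots>, M+n)\<close> and the top \<open>\<pi>(N, \<dots>, N+s)\<close> occurs in a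
  maximal chain: a cover step from an element of the chain towards its successor in the chain is
  comparable with the whole chain.\<close>

lemma maximal_chain_rank_interval:
  assumes mc: "maximal_chain_in C (Pset n M N s)" and "s \<le> n" and "M \<le> N"
    and "int k \<le> pd_rank n M N (consec N s)"
  shows "\<exists>c\<in>C. pd_rank n M N c = int k"
proof -
  have C: "C \<subseteq> Pset n M N s" "is_chain C"
    using maximal_chain_in_subset[OF mc] maximal_chain_in_is_chain[OF mc] by auto
  have bottom: "consec M n \<in> C"
    using maximal_chain_mem[OF mc consec_in_Pset[OF order_refl \<open>M \<le> N\<close> \<open>s \<le> n\<close> order_refl]]
      consec_pd_le C(1) by blast
  have top: "consec N s \<in> C"
    using maximal_chain_mem[OF mc consec_in_Pset[OF \<open>M \<le> N\<close> order_refl order_refl \<open>s \<le> n\<close>]]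
      pd_le_consec_top C(1) by blast
  show ?thesis
    using assms(4)
  proof (induction k)
    case 0
    then show ?case
      using bottom pd_rank_consec_bottom by auto
  next
    case (Suc k)
    then obtain a where "a \<in> C" and rank_a: "pd_rank n M N a = int k"
      by auto
    define U where "U = {c \<in> C. pd_le a c \<and> c \<noteq> a}"
    have "consec N s \<in> U"
      using top \<open>a \<in> C\<close> C(1) Suc.prems rank_a pd_le_consec_top unfolding U_def by auto
    moreover have "finite U" and "is_chain U"
      using finite_subset[OF C(1) finite_Pset] is_chain_subset[OF C(2)] unfolding U_def by auto
    ultimately obtain b where "b \<in> U" and least: "\<forall>c\<in>U. pd_le b c"
      using finite_chain_has_least by blast
    then have "a \<in> Pset n M N s" "b \<in> Pset n M N s" "pd_le a b" "a \<noteq> b"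
      using \<open>a \<in> C\<close> C(1) unfolding U_def by auto
    then obtain z where "z \<in> Pset n M N s" "pd_le a z" "pd_le z b"
        and rank_z: "pd_rank n M N z = pd_rank n M N a + 1"
      using Pset_cover_step by blast
    moreover have "pd_le c z \<or> pd_le z c" if "c \<in> C" for c
    proof -
      have "pd_le c a \<or> pd_le a c"
        using C(2) \<open>a \<in> C\<close> that unfolding is_chain_def by blast
      then show ?thesis
        using least that \<open>pd_le a z\<close> \<open>pd_le z b\<close> pd_le_trans unfolding U_def by blast
    qed
    ultimately have "z \<in> C"
      using maximal_chain_mem[OF mc] by blast
    then show ?case
      using rank_z rank_a by (intro bexI[of _ z]) simp_all
  qed
qed

lemma maximal_chain_card:
  assumes mc: "maximal_chain_in C (Pset n M N s)" and "s \<le> n" and "M \<le> N"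
  shows "int (Suc n) * (N - M + 1) \<le> int (card C) + int s"
proof -
  let ?top = "pd_rank n M N (consec N s)"
  have "finite C"
    using finite_maximal_chain[OF mc] .
  have "{0..?top} \<subseteq> pd_rank n M N ` C"
  proof
    fix v assume "v \<in> {0..?top}"
    then obtain c where "c \<in> C" and "pd_rank n M N c = int (nat v)"
      using maximal_chain_rank_interval[OF assms, of "nat v"] by auto
    then show "v \<in> pd_rank n M N ` C"
      using \<open>v \<in> {0..?top}\<close> by (intro image_eqI[of v _ c]) simp_all
  qed
  then have "card {0..?top} \<le> card (pd_rank n M N ` C)"
    using \<open>finite C\<close> by (intro card_mono) simp_all
  also have "\<dots> \<le> card C"
    using \<open>finite C\<close> by (rule card_image_le)
  finally have "card {0..?top} \<le> card C" .
  moreover have "int (Suc n) * 1 \<le> int (Suc n) * (N - M + 1)"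
    using \<open>M \<le> N\<close> by (intro mult_left_mono) simp_all
  ultimately show ?thesis
    using pd_rank_consec_top[OF \<open>s \<le> n\<close>, of M N] \<open>s \<le> n\<close> by simp
qed

lemma (in vector_space) span_subset_if_independent_card_ge:
  assumes "independent S" and "S \<subseteq> span E" and "finite E" and "card E \<le> card S"
  shows "span E \<subseteq> span S"
proof
  fix a assume "a \<in> span E"
  show "a \<in> span S"
  proof (rule ccontr)
    assume "a \<notin> span S"
    then have "independent (insert a S)" and "a \<notin> S"
      using independent_insertI assms(1) span_base by blast+
    moreover have "insert a S \<subseteq> span E"
      using \<open>a \<in> span E\<close> assms(2) by blast
    ultimately have "card (insert a S) \<le> card E" and "finite S"
      using independent_span_bound[OF assms(3)] assms(1,2) by blast+
    then show False
      using \<open>a \<notin> S\<close> assms(4) by simp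
  qed
qed

lemma (in vector_space) independent_Un:
  assumes "independent A" and "independent B" and "span A \<inter> span B \<subseteq> {0}"
  shows "independent (A \<union> B)"
proof -
  have not_in_span: "a \<notin> span ((X \<union> Y) - {a})"
    if "independent X" and "span X \<inter> span Y \<subseteq> {0}" and "a \<in> X" for X Y a
  proof
    assume "a \<in> span ((X \<union> Y) - {a})"
    have "a \<notin> Y"
      using that dependent_zero span_base by blast
    then have "(X \<union> Y) - {a} = (X - {a}) \<union> Y"
      by blast
    then obtain x y where "a = x + y" and x: "x \<in> span (X - {a})" and "y \<in> span Y"
      using \<open>a \<in> span ((X \<union> Y) - {a})\<close> span_Un by auto
    moreover have "x \<in> span X"
      using x span_mono[of "X - {a}" X] by blast
    ultimately have "y \<in> span X"
      using span_diff[of a X x] span_base[OF \<open>a \<in> X\<close>] by simp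
    then have "a \<in> span (X - {a})"
      using that(2) \<open>y \<in> span Y\<close> \<open>a = x + y\<close> x by auto
    then show False
      using that(1,3) unfolding dependent_def by blast
  qed
  have "span B \<inter> span A \<subseteq> {0}"
    using assms(3) by blast
  then show ?thesis
    unfolding dependent_def
    using not_in_span[OF assms(1,3)] not_in_span[OF assms(2)] by (metis Un_commute Un_iff)
qed

definition unit_array :: "nat \<Rightarrow> int \<Rightarrow> array" where
  "unit_array i j = (\<lambda>i' j'. if i' = i \<and> j' = j then 1 else 0)"

lemma sum_array_apply: "(sum f S :: array) i j = (\<Sum>x\<in>S. f x i j)"
  by (induction S rule: infinite_finite_induct) auto

lemma Bspace_subset_span_unit_arrays:
  "Bspace n M N \<subseteq> arr.span ((\<lambda>(i, j). unit_array i j) ` (SIGMA i:{..n}. {M + int i..N + int i}))"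
proof
  let ?I = "SIGMA i:{..n}. {M + int i..N + int i}"
  fix \<beta> assume "\<beta> \<in> Bspace n M N"
  have "\<beta> = (\<Sum>(i, j)\<in>?I. arr_scale (\<beta> i j) (unit_array i j))"
  proof (intro ext)
    fix i j
    have "(\<Sum>(i', j')\<in>?I. arr_scale (\<beta> i' j') (unit_array i' j')) i j =
        (\<Sum>p\<in>?I. if p = (i, j) then \<beta> i j else 0)"
      unfolding sum_array_apply arr_scale_def unit_array_def by (intro sum.cong) (auto split: if_splits)
    also have "\<dots> = \<beta> i j"
      using \<open>\<beta> \<in> Bspace n M N\<close> unfolding Bspace_def by (simp add: sum.delta') blast
    finally show "\<beta> i j = (\<Sum>(i', j')\<in>?I. arr_scale (\<beta> i' j') (unit_array i' j')) i j" ..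
  qed
  also have "\<dots> \<in> arr.span ((\<lambda>(i, j). unit_array i j) ` ?I)"
    by (intro arr.span_sum) (auto intro: arr.span_scale arr.span_base)
  finally show "\<beta> \<in> arr.span ((\<lambda>(i, j). unit_array i j) ` ?I)" .
qed

lemma BHK_inter_span_consec:
  assumes "M \<le> N" and "s \<le> Suc n"
  shows "BHK n M N s \<inter> arr.span (pure ` consec M ` {..<s}) \<subseteq> {0}"
proof
  fix y assume "y \<in> BHK n M N s \<inter> arr.span (pure ` consec M ` {..<s})"
  then show "y \<in> {0}"
    using span_consec_herzog_kuehl_eq_0[OF assms, of y] unfolding BHK_eq by simp
qed

lemma span_maximal_chain_subset_BHK:
  assumes "maximal_chain_in C (Pset n M N s)"
  shows "arr.span (pure ` C) \<subseteq> BHK n M N s"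
proof (rule arr.span_minimal[OF _ subspace_BHK])
  show "pure ` C \<subseteq> BHK n M N s"
    using maximal_chain_in_subset[OF assms] pure_in_BHK by blast
qed

text \<open>A maximal chain together with \<open>\<pi>(M), \<pi>(M, M+1), \<dots>, \<pi>(M, \<dots>, M+s-1)\<close> is independent and has at
  least \<open>dim B\<^sub>M\<^sub>,\<^sub>N\<close> elements, hence spans \<open>B\<^sub>M\<^sub>,\<^sub>N\<close>.\<close>

lemma Bspace_subset_span_maximal_chain_consec:
  assumes mc: "maximal_chain_in C (Pset n M N s)" and "s \<le> n" and "M \<le> N"
  shows "Bspace n M N \<subseteq> arr.span (pure ` C \<union> pure ` consec M ` {..<s})"
proof -
  define A where "A = pure ` C"
  define W where "W = pure ` consec M ` {..<s}"
  define I where "I = (SIGMA i:{..n}. {M + int i..N + int i})"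
  define E where "E = (\<lambda>(i, j). unit_array i j) ` I"
  have "finite C"
    using finite_maximal_chain[OF mc] .
  have indep_A: "arr.independent A"
    unfolding A_def using independent_pure_maximal_chain[OF mc] .
  have inter: "arr.span A \<inter> arr.span W \<subseteq> {0}"
    unfolding A_def W_def using span_maximal_chain_subset_BHK[OF mc] BHK_inter_span_consec[OF \<open>M \<le> N\<close>, of s n]
      \<open>s \<le> n\<close> by auto
  have indep: "arr.independent (A \<union> W)"
    using arr.independent_Un[OF indep_A independent_pure_consec[of M s, folded W_def] inter] .
  have "A \<inter> W = {}"
  proof -
    have "A \<inter> W \<subseteq> arr.span A \<inter> arr.span W"
      using arr.span_superset[of A] arr.span_superset[of W] by blast
    moreover have "0 \<notin> A \<union> W"
      using arr.dependent_zero[of "A \<union> W"] indep by argo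
    ultimately show ?thesis
      using inter by blast
  qed
  moreover have "card A = card C"
    unfolding A_def using card_image[OF inj_on_pure_maximal_chain[OF mc]] .
  moreover have "card W = s"
  proof -
    have "inj_on (\<lambda>t. pure (consec M t)) {..<s}"
      using pure_inject[OF sorted_consec sorted_consec] length_consec
      by (intro inj_onI) (metis Suc_inject)
    then show ?thesis
      unfolding W_def by (simp add: image_image card_image)
  qed
  moreover have "finite A" and "finite W"
    unfolding A_def W_def using \<open>finite C\<close> by simp_all
  ultimately have card: "card (A \<union> W) = card C + s"
    by (simp add: card_Un_disjoint)
  have "W \<subseteq> Bspace n M N"
    unfolding W_def using consec_in_Pset[OF order_refl \<open>M \<le> N\<close> le0] \<open>s \<le> n\<close> unfolding Pset_def by auto
  moreover have "A \<subseteq> Bspace n M N"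
    unfolding A_def using maximal_chain_in_subset[OF mc] unfolding Pset_def by auto
  ultimately have "A \<union> W \<subseteq> arr.span E"
    using Bspace_subset_span_unit_arrays unfolding E_def I_def by blast
  moreover have "finite E"
    unfolding E_def I_def by simp
  moreover have "card E \<le> card (A \<union> W)"
  proof -
    have "card E \<le> card I"
      unfolding E_def by (rule card_image_le) (simp add: I_def)
    then have "int (card E) \<le> int (card I)"
      by simp
    also have "\<dots> = int (Suc n) * (N - M + 1)"
      unfolding I_def using \<open>M \<le> N\<close> by (simp add: card_SigmaI algebra_simps)
    also have "\<dots> \<le> int (card (A \<union> W))"
      using maximal_chain_card[OF assms] card by simp
    finally show ?thesis
      by simp
  qed
  ultimately have "arr.span E \<subseteq> arr.span (A \<union> W)"
    by (rule arr.span_subset_if_independent_card_ge[OF indep])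
  then show ?thesis
    using Bspace_subset_span_unit_arrays unfolding A_def W_def E_def I_def by blast
qed

lemma BHK_subset_span_maximal_chain:
  assumes mc: "maximal_chain_in C (Pset n M N s)" and "s \<le> n" and "M \<le> N"
  shows "BHK n M N s \<subseteq> arr.span (pure ` C)"
proof
  fix x assume "x \<in> BHK n M N s"
  then obtain a w where "x = a + w" and a: "a \<in> arr.span (pure ` C)"
    and w: "w \<in> arr.span (pure ` consec M ` {..<s})"
    using Bspace_subset_span_maximal_chain_consec[OF assms] arr.span_Un unfolding BHK_eq by blast
  have "w = x - a"
    using \<open>x = a + w\<close> by simp
  then have "w \<in> BHK n M N s"
    using \<open>x \<in> BHK n M N s\<close> span_maximal_chain_subset_BHK[OF mc] a
      arr.subspace_diff[OF subspace_BHK] by blast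
  then have "w = 0"
    using BHK_inter_span_consec[OF \<open>M \<le> N\<close>, of s n] \<open>s \<le> n\<close> w by auto
  then show "x \<in> arr.span (pure ` C)"
    using \<open>x = a + w\<close> a by simp
qed

theorem proposition2p3:
  fixes n :: nat and M N :: int and s :: nat and C :: "int list set"
  assumes "n \<ge> 1" and "M \<le> N" and "s \<le> n"
    and "maximal_chain_in C (Pset n M N s)"
  shows "inj_on pure C \<and> arr.independent (pure ` C) \<and> arr.span (pure ` C) = BHK n M N s"
proof (intro conjI)
  note mc = assms(4)
  show "inj_on pure C"
    using inj_on_pure_maximal_chain[OF mc] .
  show "arr.independent (pure ` C)"
    using independent_pure_maximal_chain[OF mc] .
  show "arr.span (pure ` C) = BHK n M N s"
    using span_maximal_chain_subset_BHK[OF mc] BHK_subset_span_maximal_chain[OF mc assms(3,2)]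
    by (rule subset_antisym)
qed

end
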